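(* Let $T$ be a $J$-unitary operator on ${\cal K}$. Then the geometric multiplicity of $1$ as an eigenvalue of $T$ equals the multiplicity of $1$ as an eigenvalue of $V(T)$, and the eigenvectors coincide: $\mathrm{Ker}(T-{\bf 1})=\mathrm{Ker}(V(T)-{\bf 1})$.
   Context: ${\cal H}$ is a separable complex Hilbert space, ${\cal K}={\cal H}\oplus{\cal H}$, $J=\begin{pmatrix}{\bf 1}&0\\0&-{\bf 1}\end{pmatrix}$. A bounded invertible $T$ on ${\cal K}$ is $J$-unitary if $T^*JT=J$; writing $T=\begin{pmatrix}a&b\\c&d\end{pmatrix}$ the blocks $a,d$ are invertible. $V(T)$ denotes the unitary $V(T)=\begin{pmatrix}(a^* )^{-1}&bd^{-1}\\-d^{-1}c&d^{-1}\end{pmatrix}=\begin{pmatrix}a-bd^{-1}c&bd^{-1}\\-d^{-1}c&d^{-1}\end{pmatrix}$. *)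

theory Defs
  imports "HOL-Analysis.Analysis"
begin

class complex_vector = real_vector +
  fixes scaleC :: "complex \<Rightarrow> 'a \<Rightarrow> 'a"  (infixr \<open>*\<^sub>C\<close> 75)
  assumes scaleC_add_right: "a *\<^sub>C (x + y) = a *\<^sub>C x + a *\<^sub>C y"
    and scaleC_add_left: "(a + b) *\<^sub>C x = a *\<^sub>C x + b *\<^sub>C x"
    and scaleC_scaleC: "a *\<^sub>C (b *\<^sub>C x) = (a * b) *\<^sub>C x"
    and scaleC_one: "1 *\<^sub>C x = x"
    and scaleR_scaleC: "scaleR r x = complex_of_real r *\<^sub>C x"

class chilbert_space = complex_vector + banach +
  fixes cinner :: "'a \<Rightarrow> 'a \<Rightarrow> complex"
  assumes cinner_conj: "cinner x y = cnj (cinner y x)"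
    and cinner_add_right: "cinner x (y + z) = cinner x y + cinner x z"
    and cinner_scaleC_right: "cinner x (a *\<^sub>C y) = a * cinner x y"
    and cinner_self_real: "Im (cinner x x) = 0"
    and cinner_self_nonneg: "0 \<le> Re (cinner x x)"
    and cinner_self_zero: "cinner x x = 0 \<longleftrightarrow> x = 0"
    and norm_cinner: "norm x = sqrt (Re (cinner x x))"

definition scaleK :: "complex \<Rightarrow> 'a::complex_vector \<times> 'a \<Rightarrow> 'a \<times> 'a" where
  "scaleK c u = (c *\<^sub>C fst u, c *\<^sub>C snd u)"

definition kinner :: "'a::chilbert_space \<times> 'a \<Rightarrow> 'a \<times> 'a \<Rightarrow> complex" where
  "kinner u v = cinner (fst u) (fst v) + cinner (snd u) (snd v)"

definition bounded_op :: "('a::chilbert_space \<times> 'a \<Rightarrow> 'a \<times> 'a) \<Rightarrow> bool" where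
  "bounded_op T \<longleftrightarrow> bounded_linear T \<and> (\<forall>c u. T (scaleK c u) = scaleK c (T u))"

definition is_adjoint :: "('a::chilbert_space \<times> 'a \<Rightarrow> 'a \<times> 'a) \<Rightarrow> ('a \<times> 'a \<Rightarrow> 'a \<times> 'a) \<Rightarrow> bool" where
  "is_adjoint T S \<longleftrightarrow> (\<forall>u v. kinner (T u) v = kinner u (S v))"

definition Jop :: "'a::ab_group_add \<times> 'a \<Rightarrow> 'a \<times> 'a" where
  "Jop u = (fst u, - snd u)"

definition J_unitary :: "('a::chilbert_space \<times> 'a \<Rightarrow> 'a \<times> 'a) \<Rightarrow> bool" where
  "J_unitary T \<longleftrightarrow> bounded_op T \<and> bij T \<and>
     (\<exists>S. is_adjoint T S \<and> (\<forall>u. S (Jop (T u)) = Jop u))"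

definition blk_a :: "('a::zero \<times> 'a \<Rightarrow> 'a \<times> 'a) \<Rightarrow> 'a \<Rightarrow> 'a" where
  "blk_a T x = fst (T (x, 0))"
definition blk_b :: "('a::zero \<times> 'a \<Rightarrow> 'a \<times> 'a) \<Rightarrow> 'a \<Rightarrow> 'a" where
  "blk_b T y = fst (T (0, y))"
definition blk_c :: "('a::zero \<times> 'a \<Rightarrow> 'a \<times> 'a) \<Rightarrow> 'a \<Rightarrow> 'a" where
  "blk_c T x = snd (T (x, 0))"
definition blk_d :: "('a::zero \<times> 'a \<Rightarrow> 'a \<times> 'a) \<Rightarrow> 'a \<Rightarrow> 'a" where
  "blk_d T y = snd (T (0, y))"

definition Vop :: "('a::ab_group_add \<times> 'a \<Rightarrow> 'a \<times> 'a) \<Rightarrow> 'a \<times> 'a \<Rightarrow> 'a \<times> 'a" where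
  "Vop T u = (let a = blk_a T; b = blk_b T; c = blk_c T; di = inv (blk_d T);
                  x = fst u; y = snd u
              in (a x - b (di (c x)) + b (di y), - di (c x) + di y))"

end

theory Submission
  imports Defs
begin

text \<open>Writing \<open>T = [[a, b], [c, d]]\<close>, the fixed-point equations of \<open>T\<close> and of \<open>V(T)\<close> are
  the same pair of equations, rearranged by solving the second one for \<open>y\<close> through \<open>d\<^sup>-\<^sup>1\<close>;
  so everything hinges on \<open>d\<close> being invertible. Comparing the lower right blocks of
  \<open>T\<^sup>* J T = J\<close> and of \<open>T J T\<^sup>* = J\<close> gives \<open>\<parallel>d y\<parallel> \<ge> \<parallel>y\<parallel>\<close> and \<open>\<parallel>d\<^sup>* z\<parallel> \<ge> \<parallel>z\<parallel>\<close>. The first makes \<open>d\<close>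
  injective; the second makes \<open>d d\<^sup>*\<close> a bounded coercive operator, and such an operator is
  surjective because \<open>x \<mapsto> x + t (z - d d\<^sup>* x)\<close> is a contraction for small \<open>t > 0\<close>.\<close>

lemma cinner_zero_right [simp]: "cinner x (0::'a::chilbert_space) = 0"
  using cinner_add_right[of x 0 0] by simp

lemma cinner_zero_left [simp]: "cinner (0::'a::chilbert_space) x = 0"
  using cinner_conj[of 0 x] by simp

lemma cinner_minus_right [simp]: "cinner x (- y::'a::chilbert_space) = - cinner x y"
  using cinner_add_right[of x y "-y"] by (simp add: eq_neg_iff_add_eq_0 add.commute)

lemma cinner_diff_right: "cinner x (y - z::'a::chilbert_space) = cinner x y - cinner x z"
  using cinner_add_right[of x y "-z"] by simp

lemma cinner_add_left: "cinner (x + y) (z::'a::chilbert_space) = cinner x z + cinner y z"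
  by (metis cinner_add_right cinner_conj complex_cnj_add)

lemma cinner_minus_left [simp]: "cinner (- x) (y::'a::chilbert_space) = - cinner x y"
  by (metis cinner_minus_right cinner_conj complex_cnj_minus)

lemma cinner_diff_left: "cinner (x - y) (z::'a::chilbert_space) = cinner x z - cinner y z"
  using cinner_add_left[of x "-y" z] by simp

lemma cinner_scaleR_right: "cinner x (r *\<^sub>R y::'a::chilbert_space) = of_real r * cinner x y"
  by (simp add: scaleR_scaleC cinner_scaleC_right)

lemma cinner_scaleR_left: "cinner (r *\<^sub>R x) (y::'a::chilbert_space) = of_real r * cinner x y"
  by (metis cinner_scaleR_right cinner_conj complex_cnj_mult complex_cnj_complex_of_real)

lemma Re_cinner_commute: "Re (cinner x (y::'a::chilbert_space)) = Re (cinner y x)"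
  by (subst cinner_conj) simp

lemma power2_norm_eq_cinner: "(norm (x::'a::chilbert_space))\<^sup>2 = Re (cinner x x)"
  by (simp add: norm_cinner cinner_self_nonneg)

lemma power2_norm_diff:
  "(norm (x - y::'a::chilbert_space))\<^sup>2 = (norm x)\<^sup>2 - 2 * Re (cinner x y) + (norm y)\<^sup>2"
  by (simp add: power2_norm_eq_cinner cinner_diff_left cinner_diff_right Re_cinner_commute[of y x])

lemma cinner_eq_zero_imp_eq_zero:
  assumes "\<And>y. cinner y x = 0"
  shows "x = (0::'a::chilbert_space)"
  using assms cinner_self_zero by blast

lemma Re_cinner_le_norm_mult: "Re (cinner x (y::'a::chilbert_space)) \<le> norm x * norm y"
proof (cases "x = 0 \<or> y = 0")
  case True
  then show ?thesis by auto
next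
  case False
  then have nx: "norm x > 0" and ny: "norm y > 0" by auto
  define x' y' where "x' = (1 / norm x) *\<^sub>R x" and "y' = (1 / norm y) *\<^sub>R y"
  have "0 \<le> (norm (x' - y'))\<^sup>2" by simp
  then have "2 * Re (cinner x' y') \<le> 2"
    using nx ny by (simp add: power2_norm_diff x'_def y'_def)
  then have "Re (cinner x y) / (norm x * norm y) \<le> 1"
    by (simp add: x'_def y'_def cinner_scaleR_left cinner_scaleR_right mult.commute)
  then show ?thesis using nx ny by (simp add: divide_le_eq)
qed

lemma adjoint_diff:
  fixes A B :: "'a::chilbert_space \<Rightarrow> 'a"
  assumes "\<And>y z. cinner (A y) z = cinner y (B z)"
  shows "B (p - q) = B p - B q"
proof -
  have "cinner y (B (p - q) - (B p - B q)) = 0" for y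
    using assms[symmetric] by (simp add: cinner_diff_right)
  then show ?thesis using cinner_eq_zero_imp_eq_zero by fastforce
qed

lemma adjoint_norm_bound:
  fixes A B :: "'a::chilbert_space \<Rightarrow> 'a"
  assumes adj: "\<And>y z. cinner (A y) z = cinner y (B z)"
    and bound: "\<And>y. norm (A y) \<le> K * norm y" and "0 \<le> K"
  shows "norm (B z) \<le> K * norm z"
proof -
  have "(norm (B z))\<^sup>2 = Re (cinner (A (B z)) z)"
    by (simp add: power2_norm_eq_cinner adj)
  also have "\<dots> \<le> norm (A (B z)) * norm z" by (rule Re_cinner_le_norm_mult)
  also have "\<dots> \<le> K * norm (B z) * norm z" by (simp add: bound mult_right_mono)
  finally have "norm (B z) * norm (B z) \<le> norm (B z) * (K * norm z)"
    by (simp add: power2_eq_square algebra_simps)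
  then show ?thesis
    using \<open>0 \<le> K\<close> by (cases "B z = 0") auto
qed

lemma coercive_imp_surj:
  fixes P :: "'a::chilbert_space \<Rightarrow> 'a"
  assumes diff: "\<And>x y. P (x - y) = P x - P y"
    and bounded: "\<And>w. norm (P w) \<le> M * norm w"
    and coercive: "\<And>w. (norm w)\<^sup>2 \<le> Re (cinner w (P w))"
  shows "surj P"
proof -
  define L where "L = max M 1"
  have L1: "L \<ge> 1" by (simp add: L_def)
  define t where "t = 1 / L\<^sup>2"
  define c where "c = sqrt (1 - 1 / L\<^sup>2)"
  have t0: "t > 0" and c: "0 \<le> c" "c < 1"
    using L1 by (auto simp: t_def c_def)
  have contraction: "norm (w - t *\<^sub>R P w) \<le> c * norm w" for w
  proof -
    have "norm (P w) \<le> L * norm w"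
      using bounded[of w] by (smt (verit) L_def mult_right_mono norm_ge_zero)
    then have P_bound: "(norm (P w))\<^sup>2 \<le> L\<^sup>2 * (norm w)\<^sup>2"
      by (metis norm_ge_zero power_mono power_mult_distrib)
    have "(norm (w - t *\<^sub>R P w))\<^sup>2 = (norm w)\<^sup>2 - 2 * t * Re (cinner w (P w)) + t\<^sup>2 * (norm (P w))\<^sup>2"
      using t0 by (simp add: power2_norm_diff cinner_scaleR_right power_mult_distrib)
    also have "\<dots> \<le> (norm w)\<^sup>2 - 2 * t * (norm w)\<^sup>2 + t\<^sup>2 * (L\<^sup>2 * (norm w)\<^sup>2)"
      using coercive[of w] P_bound t0 by (smt (verit) mult_left_mono zero_le_power2)
    also have "\<dots> = (1 - 1 / L\<^sup>2) * (norm w)\<^sup>2"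
      using L1 by (simp add: t_def field_simps power2_eq_square)
    also have "\<dots> = (c * norm w)\<^sup>2"
      using L1 by (simp add: c_def power_mult_distrib)
    finally show ?thesis
      by (rule power2_le_imp_le) (simp add: c)
  qed
  show ?thesis
    unfolding surj_def
  proof
    fix z
    define F where "F x = x + t *\<^sub>R (z - P x)" for x
    have "\<forall>x y. dist (F x) (F y) \<le> c * dist x y"
    proof (intro allI)
      fix x y
      have "F x - F y = (x - y) - t *\<^sub>R P (x - y)"
        by (simp add: F_def diff algebra_simps)
      then show "dist (F x) (F y) \<le> c * dist x y"
        using contraction[of "x - y"] by (simp add: dist_norm)
    qed
    then have "\<exists>!x. F x = x" by (rule banach_fix_type[OF c])
    then obtain x where "F x = x" by blast
    then have "t *\<^sub>R (z - P x) = 0" by (simp add: F_def)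
    then show "\<exists>x. z = P x" using t0 by auto
  qed
qed

lemma bounded_linear_blk_d:
  fixes T :: "'a::real_normed_vector \<times> 'a \<Rightarrow> 'a \<times> 'a"
  assumes "bounded_linear T"
  shows "bounded_linear (blk_d T)"
  unfolding blk_d_def[abs_def]
  by (intro bounded_linear_compose[OF bounded_linear_snd] bounded_linear_compose[OF assms]
      bounded_linear_Pair bounded_linear_zero bounded_linear_ident)

lemma bounded_linear_blk_b:
  fixes T :: "'a::real_normed_vector \<times> 'a \<Rightarrow> 'a \<times> 'a"
  assumes "bounded_linear T"
  shows "bounded_linear (blk_b T)"
  unfolding blk_b_def[abs_def]
  by (intro bounded_linear_compose[OF bounded_linear_fst] bounded_linear_compose[OF assms]
      bounded_linear_Pair bounded_linear_zero bounded_linear_ident)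

lemma T_block_form:
  fixes T :: "'a::real_normed_vector \<times> 'a \<Rightarrow> 'a \<times> 'a"
  assumes "bounded_linear T"
  shows "T (x, y) = (blk_a T x + blk_b T y, blk_c T x + blk_d T y)"
proof -
  interpret T: bounded_linear T by (rule assms)
  have "T (x, y) = T (x, 0) + T (0, y)" by (simp flip: T.add)
  then show ?thesis by (simp add: blk_a_def blk_b_def blk_c_def blk_d_def prod_eq_iff)
qed

lemma is_adjoint_blk_d:
  assumes "is_adjoint T S"
  shows "cinner (blk_d T y) z = cinner y (blk_d S (z::'a::chilbert_space))"
  using assms[unfolded is_adjoint_def, rule_format, of "(0, y)" "(0, z)"]
  by (simp add: kinner_def blk_d_def)

lemma Re_kinner_Jop_right:
  "Re (kinner (p::'a::chilbert_space \<times> 'a) (Jop p)) = (norm (fst p))\<^sup>2 - (norm (snd p))\<^sup>2"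
  by (simp add: kinner_def Jop_def power2_norm_eq_cinner)

lemma Re_kinner_Jop_left:
  "Re (kinner (Jop p) (p::'a::chilbert_space \<times> 'a)) = (norm (fst p))\<^sup>2 - (norm (snd p))\<^sup>2"
  by (simp add: kinner_def Jop_def power2_norm_eq_cinner)

lemma Jop_adjoint_right_inverse:
  assumes "bij T" "\<And>u. S (Jop (T u)) = Jop u"
  shows "T (Jop (S v)) = Jop (v::'a::ab_group_add \<times> 'a)"
proof -
  obtain w where Tw: "T w = Jop v" using bij_is_surj[OF assms(1)] by (metis surjD)
  have "S v = Jop w" using assms(2)[of w] by (simp add: Tw Jop_def)
  then show ?thesis by (simp add: Tw Jop_def)
qed

lemma norm_le_norm_blk_d:
  assumes "is_adjoint T S" "\<And>u. S (Jop (T u)) = Jop u"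
  shows "norm (y::'a::chilbert_space) \<le> norm (blk_d T y)"
proof -
  have "kinner (T (0, y)) (Jop (T (0, y))) = kinner (0, y) (Jop (0, y))"
    using assms unfolding is_adjoint_def by metis
  then have "Re (kinner (T (0, y)) (Jop (T (0, y)))) = Re (kinner (0, y) (Jop (0, y)))"
    by simp
  then have "(norm (blk_b T y))\<^sup>2 - (norm (blk_d T y))\<^sup>2 = - (norm y)\<^sup>2"
    unfolding Re_kinner_Jop_right by (simp add: blk_b_def blk_d_def)
  then show ?thesis by (smt (verit) norm_ge_zero power2_le_imp_le zero_le_power2)
qed

lemma norm_le_norm_blk_d_adjoint:
  assumes "is_adjoint T S" "bij T" "\<And>u. S (Jop (T u)) = Jop u"
  shows "norm (z::'a::chilbert_space) \<le> norm (blk_d S z)"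
proof -
  have "kinner (Jop (S (0, z))) (S (0, z)) = kinner (T (Jop (S (0, z)))) (0, z)"
    using assms(1) unfolding is_adjoint_def by metis
  also have "\<dots> = kinner (Jop (0, z)) (0, z)"
    by (simp add: Jop_adjoint_right_inverse[OF assms(2,3)])
  finally have "Re (kinner (Jop (S (0, z))) (S (0, z))) = Re (kinner (Jop (0, z)) (0, z))"
    by simp
  then have "(norm (blk_b S z))\<^sup>2 - (norm (blk_d S z))\<^sup>2 = - (norm z)\<^sup>2"
    unfolding Re_kinner_Jop_left by (simp add: blk_b_def blk_d_def)
  then show ?thesis by (smt (verit) norm_ge_zero power2_le_imp_le zero_le_power2)
qed

lemma J_unitary_bij_blk_d:
  fixes T :: "'a::chilbert_space \<times> 'a \<Rightarrow> 'a \<times> 'a"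
  assumes "J_unitary T"
  shows "bij (blk_d T)"
proof -
  from assms obtain S where "bounded_linear T" and bij: "bij T"
    and adj: "is_adjoint T S" and J: "\<And>u. S (Jop (T u)) = Jop u"
    by (auto simp: J_unitary_def bounded_op_def)
  interpret d: bounded_linear "blk_d T" by (rule bounded_linear_blk_d) fact
  obtain K where K: "\<And>y. norm (blk_d T y) \<le> K * norm y" and "0 \<le> K"
    using d.nonneg_bounded by (metis mult.commute)
  have dS_diff: "blk_d S (p - q) = blk_d S p - blk_d S q" for p q
    using adjoint_diff is_adjoint_blk_d[OF adj] by blast
  have dS_bound: "norm (blk_d S z) \<le> K * norm z" for z
    using adjoint_norm_bound is_adjoint_blk_d[OF adj] K \<open>0 \<le> K\<close> by blast
  have "surj (blk_d T \<circ> blk_d S)"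
  proof (rule coercive_imp_surj)
    show "(blk_d T \<circ> blk_d S) (x - y) = (blk_d T \<circ> blk_d S) x - (blk_d T \<circ> blk_d S) y" for x y
      by (simp add: dS_diff d.diff)
    show "norm ((blk_d T \<circ> blk_d S) w) \<le> K\<^sup>2 * norm w" for w
      using K[of "blk_d S w"] dS_bound[of w] \<open>0 \<le> K\<close>
      by (simp add: power2_eq_square) (smt (verit) mult_left_mono mult.assoc)
    show "(norm w)\<^sup>2 \<le> Re (cinner w ((blk_d T \<circ> blk_d S) w))" for w
      using norm_le_norm_blk_d_adjoint[OF adj bij J, of w]
      by (simp add: Re_cinner_commute[of w] is_adjoint_blk_d[OF adj] power_mono
          flip: power2_norm_eq_cinner)
  qed
  then have "surj (blk_d T)" unfolding surj_def comp_def by blast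
  moreover have "inj (blk_d T)"
  proof (rule injI)
    fix p q
    assume "blk_d T p = blk_d T q"
    then show "p = q" using norm_le_norm_blk_d[OF adj J, of "p - q"] by (simp add: d.diff)
  qed
  ultimately show ?thesis by (simp add: bij_def)
qed

lemma fixed_point_iff_Vop_fixed_point:
  fixes T :: "'a::real_normed_vector \<times> 'a \<Rightarrow> 'a \<times> 'a"
  assumes "bounded_linear T" and "bij (blk_d T)"
  shows "T u = u \<longleftrightarrow> Vop T u = u"
proof -
  interpret d: bounded_linear "blk_d T" by (rule bounded_linear_blk_d) fact
  interpret b: bounded_linear "blk_b T" by (rule bounded_linear_blk_b) fact
  define di where "di = inv (blk_d T)"
  have d_di: "blk_d T (di p) = p" and di_d: "di (blk_d T p) = p" for p
    using assms(2) by (simp_all add: di_def bij_is_surj surj_f_inv_f bij_is_inj)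
  have di_diff: "di (p - q) = di p - di q" for p q
    by (metis d_di di_d d.diff)
  obtain x y where u: "u = (x, y)" by fastforce
  have "T u = u \<longleftrightarrow> blk_a T x + blk_b T y = x \<and> blk_d T y = y - blk_c T x"
    by (auto simp: u T_block_form[OF assms(1)] algebra_simps)
  also have "\<dots> \<longleftrightarrow> blk_a T x + blk_b T y = x \<and> di (y - blk_c T x) = y"
    by (metis d_di di_d)
  also have "\<dots> \<longleftrightarrow> blk_a T x + blk_b T (di y - di (blk_c T x)) = x \<and> di y - di (blk_c T x) = y"
    by (auto simp: di_diff)
  also have "\<dots> \<longleftrightarrow> Vop T u = u"
    by (auto simp: u Vop_def Let_def di_def[symmetric] b.diff algebra_simps)
  finally show ?thesis .
qed

theorem theorem3p19:
  fixes T :: "'a::chilbert_space \<times> 'a \<Rightarrow> 'a \<times> 'a"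
  assumes "separable_space (euclidean :: 'a topology)"
    and "J_unitary T"
  shows "{u. T u - u = 0} = {u. Vop T u - u = 0}"
proof -
  have "bounded_linear T" using assms(2) by (simp add: J_unitary_def bounded_op_def)
  with J_unitary_bij_blk_d[OF assms(2)] show ?thesis
    by (simp add: fixed_point_iff_Vop_fixed_point)
qed

end
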